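(* Let $0\le k\le n$. There are exactly $k(n-k)+1$ isomorphism classes of matroids of rank $k$ on $n$ elements of the form $\mathsf{U}_{0,m}\oplus\mathsf{U}_{k-\ell,n-\ell-m}\oplus\mathsf{U}_{\ell,\ell}$, and the Tutte polynomials of representatives of these classes are linearly independent in $\mathbb{Z}[x,y]$.
   Context: $\mathsf{U}_{r,m}$ is the uniform matroid of rank $r$ on $m$ elements. *)

theory Defs
  imports "HOL-Computational_Algebra.Polynomial"
begin

type_synonym 'a matroid = "'a set \<times> ('a set \<Rightarrow> bool)"

definition ground :: "'a matroid \<Rightarrow> 'a set" where
  "ground M = fst M"

definition indep :: "'a matroid \<Rightarrow> 'a set \<Rightarrow> bool" where
  "indep M = snd M"

definition is_matroid :: "'a matroid \<Rightarrow> bool" where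
  "is_matroid M \<longleftrightarrow>
     finite (ground M) \<and>
     indep M {} \<and>
     (\<forall>A. indep M A \<longrightarrow> A \<subseteq> ground M) \<and>
     (\<forall>A B. indep M B \<and> A \<subseteq> B \<longrightarrow> indep M A) \<and>
     (\<forall>A B. indep M A \<and> indep M B \<and> card A < card B \<longrightarrow>
        (\<exists>x \<in> B - A. indep M (insert x A)))"

definition rk :: "'a matroid \<Rightarrow> 'a set \<Rightarrow> nat" where
  "rk M A = Max (card ` {B. B \<subseteq> A \<and> indep M B})"

definition matroid_rank :: "'a matroid \<Rightarrow> nat" where
  "matroid_rank M = rk M (ground M)"

definition matroid_iso :: "'a matroid \<Rightarrow> 'b matroid \<Rightarrow> bool" where
  "matroid_iso M N \<longleftrightarrow>
     (\<exists>f. bij_betw f (ground M) (ground N) \<and>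
          (\<forall>A \<subseteq> ground M. indep M A \<longleftrightarrow> indep N (f ` A)))"

definition uniform_matroid :: "nat \<Rightarrow> 'a set \<Rightarrow> 'a matroid" where
  "uniform_matroid r S = (S, \<lambda>A. A \<subseteq> S \<and> card A \<le> r)"

text \<open>Direct sum (intended for matroids on disjoint ground sets).\<close>
definition direct_sum :: "'a matroid \<Rightarrow> 'a matroid \<Rightarrow> 'a matroid" where
  "direct_sum M N = (ground M \<union> ground N,
     \<lambda>A. A \<subseteq> ground M \<union> ground N \<and> indep M (A \<inter> ground M) \<and> indep N (A \<inter> ground N))"

text \<open>Concrete realisation of U_{0,m} \<oplus> U_{k-l,n-l-m} \<oplus> U_{l,l} on ground set {0..<n},
  with blocks {0..<m}, {m..<n-l}, {n-l..<n}.\<close>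
definition form_matroid :: "nat \<Rightarrow> nat \<Rightarrow> nat \<times> nat \<Rightarrow> nat matroid" where
  "form_matroid k n p = (case p of (l, m) \<Rightarrow>
     direct_sum (direct_sum (uniform_matroid 0 {0..<m}) (uniform_matroid (k - l) {m..<n - l}))
                (uniform_matroid l {n - l..<n}))"

text \<open>Admissible parameters: 0 \<le> l \<le> k and 0 \<le> k - l \<le> n - l - m, i.e. m \<le> n - k.\<close>
definition form_params :: "nat \<Rightarrow> nat \<Rightarrow> (nat \<times> nat) set" where
  "form_params k n = {(l, m). l \<le> k \<and> m + k \<le> n}"

definition iso_class :: "'a matroid \<Rightarrow> nat matroid set" where
  "iso_class M = {N. is_matroid N \<and> matroid_iso N M}"

definition form_classes :: "nat \<Rightarrow> nat \<Rightarrow> nat matroid set set" where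
  "form_classes k n = (\<lambda>p. iso_class (form_matroid k n p)) ` form_params k n"

text \<open>Tutte polynomial in Z[x][y] = Z[x,y]: the outer variable is y, the inner one is x.
  T_M(x,y) = sum over A \<subseteq> E of (x-1)^(r(E)-r(A)) (y-1)^(|A|-r(A)).\<close>
definition tutte_poly :: "'a matroid \<Rightarrow> int poly poly" where
  "tutte_poly M = (\<Sum>A \<in> Pow (ground M).
      [:[:-1, 1:]:] ^ (rk M (ground M) - rk M A) * [:-1, 1:] ^ (card A - rk M A))"

definition int_lin_indep :: "('i \<Rightarrow> int poly poly) \<Rightarrow> 'i set \<Rightarrow> bool" where
  "int_lin_indep f I \<longleftrightarrow>
     (\<forall>c :: 'i \<Rightarrow> int. (\<Sum>i\<in>I. of_int (c i) * f i) = 0 \<longrightarrow> (\<forall>i\<in>I. c i = 0))"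

end

theory Submission
  imports Defs "HOL-Library.Product_Lexorder"
begin

(* The matroid with parameters (l, m) consists of m loops, l coloops and the uniform matroid
   U_{k-l,n-l-m}, so its Tutte polynomial is x^l y^m T_{U_{k-l,n-l-m}}.  If l = k or m = n - k the
   uniform part consists of loops only or of coloops only, and all these parameters give the same
   matroid; the remaining parameters, l < k and m < n - k, together with (k, n - k) are k(n-k)+1
   in number.  Order them lexicographically by (m, l).  The coefficient of x^(l+1) y^m is nonzero
   in T_(l,m), being the beta invariant binom(n-l-m-2, k-l-1) of its uniform part, and it is zero
   in every later T_(l',m'): for m' > m the factor y^m' is too large, and for m' = m only
   l' = l + 1 could contribute, through the constant term of a uniform matroid on a nonempty set,
   which is zero.  This triangularity gives linear independence, which in turn separates the
   isomorphism classes. *)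

lemma sum_Pow_Un_disjoint_mult:
  fixes f g :: "'a set \<Rightarrow> 'b::comm_semiring_0"
  assumes "finite S" "finite T" "S \<inter> T = {}"
  shows "(\<Sum>A\<in>Pow (S \<union> T). f (A \<inter> S) * g (A \<inter> T)) = (\<Sum>A\<in>Pow S. f A) * (\<Sum>B\<in>Pow T. g B)"
proof -
  have "bij_betw (\<lambda>(A, B). A \<union> B) (Pow S \<times> Pow T) (Pow (S \<union> T))"
    by (rule bij_betw_byWitness[where f' = "\<lambda>A. (A \<inter> S, A \<inter> T)"]) (use assms(3) in auto)
  then have "(\<Sum>A\<in>Pow (S \<union> T). f (A \<inter> S) * g (A \<inter> T))
      = (\<Sum>(A, B)\<in>Pow S \<times> Pow T. f ((A \<union> B) \<inter> S) * g ((A \<union> B) \<inter> T))"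
    by (simp add: sum.reindex_bij_betw[symmetric] case_prod_unfold)
  also have "\<dots> = (\<Sum>(A, B)\<in>Pow S \<times> Pow T. f A * g B)"
  proof (intro sum.cong refl, clarsimp)
    fix A B assume "A \<subseteq> S" "B \<subseteq> T"
    then have "(A \<union> B) \<inter> S = A" "(A \<union> B) \<inter> T = B" using assms(3) by auto
    then show "f ((A \<union> B) \<inter> S) * g ((A \<union> B) \<inter> T) = f A * g B" by simp
  qed
  finally show ?thesis
    by (simp add: sum.cartesian_product sum_product)
qed

lemma sum_Pow_by_card:
  fixes g :: "nat \<Rightarrow> 'b::comm_semiring_1"
  assumes "finite S"
  shows "(\<Sum>A\<in>Pow S. g (card A)) = (\<Sum>i\<le>card S. of_nat (card S choose i) * g i)"
proof -
  have "(\<Sum>A\<in>Pow S. g (card A)) = (\<Sum>i\<le>card S. \<Sum>A\<in>{A \<in> Pow S. card A = i}. g (card A))"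
    using assms by (intro sum.group[symmetric]) (auto intro: card_mono)
  also have "\<dots> = (\<Sum>i\<le>card S. of_nat (card S choose i) * g i)"
    using n_subsets[OF assms] by (intro sum.cong refl) simp
  finally show ?thesis .
qed

fun coeff_xy :: "'a::zero poly poly \<Rightarrow> nat \<times> nat \<Rightarrow> 'a" where
  "coeff_xy P (i, j) = coeff (coeff P j) i"

lemma coeff_xy_0 [simp]: "coeff_xy 0 e = 0"
  by (cases e) simp

lemma coeff_xy_lin_comb:
  "coeff_xy (\<Sum>i\<in>I. of_int (c i) * f i) e = (\<Sum>i\<in>I. c i * coeff_xy (f i) e)"
  by (cases e) (simp add: coeff_sum of_int_poly)

lemma int_lin_indep_triangular:
  fixes f :: "'i \<Rightarrow> int poly poly" and r :: "'i \<Rightarrow> 'o::linorder"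
  assumes "finite I" "inj_on r I"
    and diag: "\<And>i. i \<in> I \<Longrightarrow> coeff_xy (f i) (e i) \<noteq> 0"
    and upper: "\<And>i j. i \<in> I \<Longrightarrow> j \<in> I \<Longrightarrow> r i < r j \<Longrightarrow> coeff_xy (f j) (e i) = 0"
  shows "int_lin_indep f I"
  unfolding int_lin_indep_def
proof (intro allI impI ballI, rule ccontr)
  fix c i
  assume sum0: "(\<Sum>i\<in>I. of_int (c i) * f i) = 0" and "i \<in> I" "c i \<noteq> 0"
  define S where "S = {j \<in> I. c j \<noteq> 0}"
  have "finite S" "S \<noteq> {}"
    using \<open>finite I\<close> \<open>i \<in> I\<close> \<open>c i \<noteq> 0\<close> by (auto simp: S_def)
  then have "Min (r ` S) \<in> r ` S" by (intro Min_in) auto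
  then obtain i0 where i0: "i0 \<in> S" "r i0 = Min (r ` S)" by (metis imageE)
  have others: "c j * coeff_xy (f j) (e i0) = 0" if "j \<in> I - {i0}" for j
  proof (cases "c j = 0")
    case False
    then have "r i0 \<le> r j" using that i0 \<open>finite S\<close> by (simp add: S_def)
    moreover have "r i0 \<noteq> r j" using that i0 \<open>inj_on r I\<close> by (auto simp: S_def inj_on_eq_iff)
    ultimately show ?thesis using upper that i0 by (simp add: S_def)
  qed simp
  have "0 = (\<Sum>j\<in>I. c j * coeff_xy (f j) (e i0))"
    using arg_cong[OF sum0, of "\<lambda>P. coeff_xy P (e i0)"] by (simp add: coeff_xy_lin_comb)
  also have "\<dots> = c i0 * coeff_xy (f i0) (e i0) + (\<Sum>j\<in>I - {i0}. c j * coeff_xy (f j) (e i0))"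
    using i0(1) \<open>finite I\<close> unfolding S_def by (blast intro: sum.remove)
  also have "(\<Sum>j\<in>I - {i0}. c j * coeff_xy (f j) (e i0)) = 0"
    using others by (intro sum.neutral) blast
  finally show False using i0 diag by (simp add: S_def)
qed

lemma int_lin_indep_inj_on:
  assumes "finite I" "int_lin_indep f I"
  shows "inj_on f I"
proof (rule inj_onI, rule ccontr)
  fix i j assume ij: "i \<in> I" "j \<in> I" "f i = f j" "i \<noteq> j"
  define c :: "_ \<Rightarrow> int" where "c x = (if x = i then 1 else if x = j then -1 else 0)" for x
  have "(\<Sum>x\<in>I. of_int (c x) * f x) = (\<Sum>x\<in>I. (if x = i then f i else 0) - (if x = j then f j else 0))"
    using ij by (intro sum.cong) (auto simp: c_def)
  also have "\<dots> = 0"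
    using ij \<open>finite I\<close> by (simp add: sum_subtractf)
  finally have "c i = 0" using assms(2) ij(1) unfolding int_lin_indep_def by blast
  then show False by (simp add: c_def)
qed

lemma int_lin_indep_image:
  assumes "inj_on g I" "int_lin_indep h I" "\<And>i. i \<in> I \<Longrightarrow> f (g i) = h i"
  shows "int_lin_indep f (g ` I)"
  unfolding int_lin_indep_def
proof (intro allI impI)
  fix c :: "_ \<Rightarrow> int"
  assume "(\<Sum>x\<in>g ` I. of_int (c x) * f x) = 0"
  then have "(\<Sum>i\<in>I. of_int (c (g i)) * h i) = 0"
    using assms(1,3) by (simp add: sum.reindex)
  then have "\<forall>i\<in>I. c (g i) = 0"
    using assms(2) unfolding int_lin_indep_def by (elim allE[of _ "c \<circ> g"]) simp
  then show "\<forall>x\<in>g ` I. c x = 0" by blast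
qed

lemma rk_iso_image:
  assumes f: "bij_betw f (ground N) (ground M)"
    and indep_iff: "\<forall>A \<subseteq> ground N. indep N A \<longleftrightarrow> indep M (f ` A)"
    and A: "A \<subseteq> ground N"
  shows "rk M (f ` A) = rk N A"
proof -
  have inj: "inj_on f A" using f A bij_betw_imp_inj_on inj_on_subset by blast
  have "{B. B \<subseteq> f ` A \<and> indep M B} = image f ` {B. B \<subseteq> A \<and> indep N B}"
    using A indep_iff by (auto simp: subset_image_iff image_iff)
  moreover have "card (f ` B) = card B" if "B \<subseteq> A" for B
    using inj that by (simp add: card_image inj_on_subset)
  ultimately have "card ` {B. B \<subseteq> f ` A \<and> indep M B} = card ` {B. B \<subseteq> A \<and> indep N B}"
    by (simp add: image_image)
  then show ?thesis by (simp add: rk_def)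
qed

lemma tutte_poly_iso:
  assumes "matroid_iso N M"
  shows "tutte_poly N = tutte_poly M"
proof -
  obtain f where f: "bij_betw f (ground N) (ground M)"
    and indep_iff: "\<forall>A \<subseteq> ground N. indep N A \<longleftrightarrow> indep M (f ` A)"
    using assms unfolding matroid_iso_def by blast
  have rk_ground: "rk M (ground M) = rk N (ground N)"
    using rk_iso_image[OF f indep_iff, of "ground N"] bij_betw_imp_surj_on[OF f] by simp
  have card_image: "card (f ` A) = card A" if "A \<subseteq> ground N" for A
    using f that by (meson bij_betw_imp_inj_on card_image inj_on_subset)
  have "tutte_poly M = (\<Sum>A\<in>Pow (ground N).
      [:[:-1, 1:]:] ^ (rk M (ground M) - rk M (f ` A)) * [:-1, 1:] ^ (card (f ` A) - rk M (f ` A)))"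
    unfolding tutte_poly_def by (rule sum.reindex_bij_betw[OF bij_betw_Pow[OF f], symmetric])
  also have "\<dots> = tutte_poly N"
    unfolding tutte_poly_def rk_ground
    by (intro sum.cong refl) (simp add: rk_iso_image[OF f indep_iff] card_image)
  finally show ?thesis by simp
qed

lemma matroid_iso_refl: "matroid_iso M M"
  unfolding matroid_iso_def by (rule exI[of _ id]) simp

lemma iso_class_self: "is_matroid M \<Longrightarrow> M \<in> iso_class M"
  by (simp add: iso_class_def matroid_iso_refl)

lemma tutte_poly_iso_class: "N \<in> iso_class M \<Longrightarrow> tutte_poly N = tutte_poly M"
  by (simp add: iso_class_def tutte_poly_iso)

text \<open>The direct sum U_{0,|L|} \<oplus> U_{r,|U|} \<oplus> U_{|C|,|C|}, for pairwise disjoint L, U, C.\<close>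
definition loops_uniform_coloops :: "'a set \<Rightarrow> 'a set \<Rightarrow> 'a set \<Rightarrow> nat \<Rightarrow> 'a matroid" where
  "loops_uniform_coloops L U C r =
     (L \<union> U \<union> C, \<lambda>A. A \<subseteq> L \<union> U \<union> C \<and> A \<inter> L = {} \<and> card (A \<inter> U) \<le> r)"

lemma ground_loops_uniform_coloops [simp]: "ground (loops_uniform_coloops L U C r) = L \<union> U \<union> C"
  by (simp add: loops_uniform_coloops_def ground_def)

lemma indep_loops_uniform_coloops [simp]:
  "indep (loops_uniform_coloops L U C r) A \<longleftrightarrow> A \<subseteq> L \<union> U \<union> C \<and> A \<inter> L = {} \<and> card (A \<inter> U) \<le> r"
  by (simp add: loops_uniform_coloops_def indep_def)

lemma loops_uniform_coloops_all_loops: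
  assumes "finite U"
  shows "loops_uniform_coloops L U C 0 = loops_uniform_coloops (L \<union> U) {} C 0"
  using assms unfolding loops_uniform_coloops_def
  by (auto simp: fun_eq_iff Un_ac card_eq_0_iff)

lemma loops_uniform_coloops_all_coloops:
  assumes "finite U" "card U \<le> r"
  shows "loops_uniform_coloops L U C r = loops_uniform_coloops L {} (U \<union> C) 0"
  using assms card_mono[OF assms(1), of "_ \<inter> U"] unfolding loops_uniform_coloops_def
  by (auto simp: fun_eq_iff Un_ac intro: le_trans)

abbreviation var_x :: "int poly poly" where "var_x \<equiv> [:[:0, 1:]:]"
abbreviation var_y :: "int poly poly" where "var_y \<equiv> [:0, 1:]"

definition tutte_uniform :: "nat \<Rightarrow> nat \<Rightarrow> int poly poly" where
  "tutte_uniform r n =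
     (\<Sum>i\<le>n. of_nat (n choose i) * ([:[:-1, 1:]:] ^ (r - min i r) * [:-1, 1:] ^ (i - min i r)))"

lemma x_minus_one_plus_one: "[:[:-1, 1:]:] + 1 = var_x"
  by (simp add: one_pCons)

lemma y_minus_one_plus_one: "[:-1, 1:] + 1 = var_y"
  by (simp add: one_pCons)

locale disjoint_blocks =
  fixes L U C :: "'a set"
  assumes finite_blocks: "finite L" "finite U" "finite C"
    and disjoint_blocks: "L \<inter> U = {}" "L \<inter> C = {}" "U \<inter> C = {}"
begin

lemma finite_subset_blocks: "A \<subseteq> L \<union> U \<union> C \<Longrightarrow> finite A"
  using finite_blocks by (meson finite_Un finite_subset)

lemma card_split_blocks:
  assumes "A \<subseteq> L \<union> U \<union> C"
  shows "card A = card (A \<inter> L) + card (A \<inter> U) + card (A \<inter> C)"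
proof -
  have fin: "finite A" using finite_subset_blocks[OF assms] .
  have "card A = card ((A \<inter> L) \<union> (A \<inter> U) \<union> (A \<inter> C))"
    using assms by (metis Int_Un_distrib Int_absorb2)
  also have "\<dots> = card ((A \<inter> L) \<union> (A \<inter> U)) + card (A \<inter> C)"
    using fin disjoint_blocks by (intro card_Un_disjoint) auto
  also have "card ((A \<inter> L) \<union> (A \<inter> U)) = card (A \<inter> L) + card (A \<inter> U)"
    using fin disjoint_blocks by (intro card_Un_disjoint) auto
  finally show ?thesis .
qed

lemma rk_loops_uniform_coloops:
  assumes A: "A \<subseteq> L \<union> U \<union> C"
  shows "rk (loops_uniform_coloops L U C r) A = card (A \<inter> C) + min (card (A \<inter> U)) r"
proof -
  let ?M = "loops_uniform_coloops L U C r"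
  have finA: "finite A" using finite_subset_blocks[OF A] .
  have bound: "card B \<le> card (A \<inter> C) + min (card (A \<inter> U)) r"
    if "B \<subseteq> A" "indep ?M B" for B
  proof -
    have "card B = card (B \<inter> L) + card (B \<inter> U) + card (B \<inter> C)"
      using that by (intro card_split_blocks) simp
    moreover have "card (B \<inter> U) \<le> card (A \<inter> U)" "card (B \<inter> C) \<le> card (A \<inter> C)"
      using that finA by (auto intro!: card_mono)
    moreover have "card (B \<inter> U) \<le> r" using that(2) by simp
    ultimately show ?thesis using that(2) by simp
  qed
  obtain D where D: "D \<subseteq> A \<inter> U" "card D = min (card (A \<inter> U)) r"
    by (rule obtain_subset_with_card_n[of "min (card (A \<inter> U)) r" "A \<inter> U"]) simp_all
  have sub: "D \<union> (A \<inter> C) \<subseteq> A" using D(1) by blast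
  have "(D \<union> (A \<inter> C)) \<inter> U = D" "(D \<union> (A \<inter> C)) \<inter> L = {}"
    using D(1) disjoint_blocks by blast+
  then have ind: "indep ?M (D \<union> (A \<inter> C))"
    using order_trans[OF sub A] D(2) by simp
  have card: "card (D \<union> (A \<inter> C)) = card (A \<inter> C) + min (card (A \<inter> U)) r"
    using D finA disjoint_blocks by (subst card_Un_disjoint) (auto intro: finite_subset)
  have "card (A \<inter> C) + min (card (A \<inter> U)) r \<in> card ` {B. B \<subseteq> A \<and> indep ?M B}"
    using sub ind unfolding card[symmetric] by blast
  moreover have "finite (card ` {B. B \<subseteq> A \<and> indep ?M B})" using finA by simp
  ultimately show ?thesis
    unfolding rk_def using bound by (intro Max_eqI) blast+
qed

lemma is_matroid_loops_uniform_coloops: "is_matroid (loops_uniform_coloops L U C r)"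
  unfolding is_matroid_def
proof (intro conjI allI impI)
  let ?M = "loops_uniform_coloops L U C r"
  show "finite (ground ?M)" using finite_blocks by simp
  show "indep ?M {}" by simp
  show "A \<subseteq> ground ?M" if "indep ?M A" for A using that by simp
  show "indep ?M A" if "indep ?M B \<and> A \<subseteq> B" for A B
  proof -
    have "card (A \<inter> U) \<le> card (B \<inter> U)" using that finite_blocks by (intro card_mono) auto
    then show ?thesis using that by auto
  qed
  show "\<exists>x\<in>B - A. indep ?M (insert x A)"
    if AB: "indep ?M A \<and> indep ?M B \<and> card A < card B" for A B
  proof (cases "B \<inter> C \<subseteq> A")
    case False
    then obtain x where x: "x \<in> B \<inter> C" "x \<notin> A" by blast
    then have "insert x A \<inter> U = A \<inter> U" "insert x A \<inter> L = A \<inter> L"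
      using disjoint_blocks by blast+
    then show ?thesis using AB x by auto
  next
    case True
    then have "card (B \<inter> C) \<le> card (A \<inter> C)" using finite_blocks by (intro card_mono) auto
    moreover have "card A = card (A \<inter> L) + card (A \<inter> U) + card (A \<inter> C)"
      "card B = card (B \<inter> L) + card (B \<inter> U) + card (B \<inter> C)"
      using AB by (intro card_split_blocks; simp)+
    moreover have "A \<inter> L = {}" "B \<inter> L = {}" "card A < card B" using AB by simp_all
    ultimately have less: "card (A \<inter> U) < card (B \<inter> U)" by simp
    have "\<not> B \<inter> U \<subseteq> A \<inter> U"
      using less finite_blocks(2) card_mono[of "A \<inter> U" "B \<inter> U"] by auto
    then obtain x where x: "x \<in> B \<inter> U" "x \<notin> A" by blast
    then have "card (insert x A \<inter> U) = Suc (card (A \<inter> U))"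
      using finite_blocks by simp
    moreover have "insert x A \<inter> L = A \<inter> L" using x disjoint_blocks by blast
    ultimately show ?thesis using AB x less by auto
  qed
qed



lemma tutte_poly_loops_uniform_coloops:
  assumes "r \<le> card U"
  shows "tutte_poly (loops_uniform_coloops L U C r) = var_x ^ card C * var_y ^ card L * tutte_uniform r (card U)"
proof -
  let ?M = "loops_uniform_coloops L U C r"
  let ?X = "[:[:-1, 1:]:] :: int poly poly" and ?Y = "[:-1, 1:] :: int poly poly"
  define t where "t i = ?X ^ (r - min i r) * ?Y ^ (i - min i r)" for i
  have "(L \<union> U \<union> C) \<inter> U = U" "(L \<union> U \<union> C) \<inter> C = C" by blast+
  then have rk_ground: "rk ?M (L \<union> U \<union> C) = card C + r"
    using assms rk_loops_uniform_coloops[of "L \<union> U \<union> C" r] by simp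
  have summand: "?X ^ (rk ?M (L \<union> U \<union> C) - rk ?M A) * ?Y ^ (card A - rk ?M A)
      = (?Y ^ card (A \<inter> (L \<union> U) \<inter> L) * t (card (A \<inter> (L \<union> U) \<inter> U))) * ?X ^ (card C - card (A \<inter> C))"
    if "A \<subseteq> L \<union> U \<union> C" for A
  proof -
    have "card (A \<inter> C) \<le> card C" using finite_blocks by (intro card_mono) auto
    then have exps: "card C + r - (card (A \<inter> C) + min (card (A \<inter> U)) r)
        = (card C - card (A \<inter> C)) + (r - min (card (A \<inter> U)) r)"
      "card (A \<inter> L) + card (A \<inter> U) + card (A \<inter> C) - (card (A \<inter> C) + min (card (A \<inter> U)) r)
        = card (A \<inter> L) + (card (A \<inter> U) - min (card (A \<inter> U)) r)"
      by linarith+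
    have blocks: "A \<inter> (L \<union> U) \<inter> L = A \<inter> L" "A \<inter> (L \<union> U) \<inter> U = A \<inter> U" by blast+
    show ?thesis
      unfolding card_split_blocks[OF that] rk_loops_uniform_coloops[OF that] rk_ground exps blocks
        t_def power_add
      by (simp only: mult_ac)
  qed
  have "tutte_poly ?M = (\<Sum>A\<in>Pow ((L \<union> U) \<union> C).
      (?Y ^ card (A \<inter> (L \<union> U) \<inter> L) * t (card (A \<inter> (L \<union> U) \<inter> U))) * ?X ^ (card C - card (A \<inter> C)))"
    unfolding tutte_poly_def by (intro sum.cong) (simp_all add: summand)
  also have "\<dots> = (\<Sum>B\<in>Pow (L \<union> U). ?Y ^ card (B \<inter> L) * t (card (B \<inter> U)))
      * (\<Sum>B\<in>Pow C. ?X ^ (card C - card B))"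
    by (rule sum_Pow_Un_disjoint_mult) (use finite_blocks disjoint_blocks in auto)
  also have "(\<Sum>B\<in>Pow (L \<union> U). ?Y ^ card (B \<inter> L) * t (card (B \<inter> U)))
      = (\<Sum>B\<in>Pow L. ?Y ^ card B) * (\<Sum>B\<in>Pow U. t (card B))"
    by (rule sum_Pow_Un_disjoint_mult) (use finite_blocks disjoint_blocks in auto)
  also have "(\<Sum>B\<in>Pow L. ?Y ^ card B) = var_y ^ card L"
    using binomial_ring[of ?Y 1 "card L"] y_minus_one_plus_one
    by (simp add: sum_Pow_by_card[OF finite_blocks(1)] add.commute)
  also have "(\<Sum>B\<in>Pow C. ?X ^ (card C - card B)) = var_x ^ card C"
    using binomial_ring[of 1 ?X "card C"] x_minus_one_plus_one
    by (simp add: sum_Pow_by_card[OF finite_blocks(3), of "\<lambda>i. ?X ^ (card C - i)"] add.commute)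
  also have "(\<Sum>B\<in>Pow U. t (card B)) = tutte_uniform r (card U)"
    unfolding sum_Pow_by_card[OF finite_blocks(2), of t] by (simp add: tutte_uniform_def t_def)
  finally show ?thesis by (simp add: mult_ac)
qed

end

lemma coeff_xy_monomial_mult:
  "coeff_xy (var_x ^ l * var_y ^ m * P) (i, j) = (if l \<le> i \<and> m \<le> j then coeff_xy P (i - l, j - m) else 0)"
proof -
  have "var_x ^ l = [:monom 1 l:]" "var_y ^ m = monom 1 m"
    by (simp_all add: poly_const_pow monom_altdef)
  then show ?thesis by (simp add: coeff_monom_mult)
qed

lemma tutte_uniform_0_0: "tutte_uniform 0 0 = 1"
  by (simp add: tutte_uniform_def)

lemma coeff_xy_tutte_uniform_0_0:
  assumes "0 < n"
  shows "coeff_xy (tutte_uniform r n) (0, 0) = 0"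
proof -
  have sign: "(-1::int) ^ (r - min i r) * (-1) ^ (i - min i r) = (-1) ^ r * (-1) ^ i" for i
    by (cases "i \<le> r") (auto simp: minus_one_power_iff min_def)
  have "coeff_xy (tutte_uniform r n) (0, 0) = poly (poly (tutte_uniform r n) 0) 0"
    by (simp add: poly_0_coeff_0)
  also have "\<dots> = (\<Sum>i\<le>n. of_nat (n choose i) * ((-1) ^ r * (-1) ^ i))"
    unfolding tutte_uniform_def poly_sum sign[symmetric] by simp
  also have "\<dots> = (-1) ^ r * (\<Sum>i\<le>n. (-1) ^ i * of_nat (n choose i))"
    by (simp add: sum_distrib_left mult_ac)
  also have "\<dots> = 0" using choose_alternating_sum[OF assms] by simp
  finally show ?thesis .
qed

text \<open>Up to an additive constant this is T_{U_{r,n}}(x, 0).\<close>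
definition partial_binomial_poly :: "nat \<Rightarrow> nat \<Rightarrow> int poly" where
  "partial_binomial_poly n r = (\<Sum>i\<le>r. of_nat (n choose i) * [:-1, 1:] ^ (r - i))"

lemma partial_binomial_poly_Suc:
  "partial_binomial_poly n (Suc r) = [:-1, 1:] * partial_binomial_poly n r + of_nat (n choose Suc r)"
  unfolding partial_binomial_poly_def sum_distrib_left
  by (simp add: Suc_diff_le mult_ac)

lemma coeff_partial_binomial_poly_0:
  "coeff (partial_binomial_poly (Suc n) r) 0 = int (n choose r)"
proof (induction r)
  case 0
  then show ?case by (simp add: partial_binomial_poly_def)
next
  case (Suc r)
  then show ?case by (simp add: partial_binomial_poly_Suc of_nat_poly)
qed

lemma coeff_partial_binomial_poly_1:
  "coeff (partial_binomial_poly (Suc (Suc n)) (Suc r)) 1 = int (n choose r)"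
proof (induction r)
  case 0
  then show ?case by (simp add: partial_binomial_poly_Suc partial_binomial_poly_def of_nat_poly)
next
  case (Suc r)
  then show ?case
    by (simp add: partial_binomial_poly_Suc [of _ "Suc r"] coeff_partial_binomial_poly_0 of_nat_poly)
qed

lemma coeff_xy_tutte_uniform_1_0:
  assumes "0 < r" "r < n"
  shows "coeff_xy (tutte_uniform r n) (1, 0) = int ((n - 2) choose (r - 1))"
proof -
  define s :: "nat \<Rightarrow> int poly"
    where "s i = of_nat (n choose i) * ([:-1, 1:] ^ (r - min i r) * (-1) ^ (i - min i r))" for i
  have "coeff_xy (tutte_uniform r n) (1, 0) = coeff (\<Sum>i\<le>n. s i) 1"
    by (simp add: tutte_uniform_def s_def coeff_sum poly_sum flip: poly_0_coeff_0)
  also have "(\<Sum>i\<le>n. s i) = (\<Sum>i\<le>r. s i) + (\<Sum>i\<in>{r<..n}. s i)"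
    using assms by (subst sum.union_disjoint[symmetric]) (auto intro!: sum.cong)
  also have "(\<Sum>i\<le>r. s i) = partial_binomial_poly n r"
    unfolding partial_binomial_poly_def s_def by (intro sum.cong) auto
  also have "coeff (partial_binomial_poly n r + (\<Sum>i\<in>{r<..n}. s i)) 1
      = coeff (partial_binomial_poly n r) 1"
  proof -
    have "coeff (s i) 1 = 0" if "r < i" for i
      using that by (simp add: s_def of_nat_poly one_pCons poly_const_pow)
    then show ?thesis by (simp add: coeff_sum)
  qed
  finally have "coeff_xy (tutte_uniform r n) (1, 0) = coeff (partial_binomial_poly n r) 1" .
  moreover obtain n' r' where "n = Suc (Suc n')" "r = Suc r'"
    using assms by (metis Suc_lessE less_imp_Suc_add)
  ultimately show ?thesis using coeff_partial_binomial_poly_1[of n' r'] by simp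
qed

lemma form_matroid_eq:
  assumes "l \<le> k" "m + k \<le> n"
  shows "form_matroid k n (l, m) = loops_uniform_coloops {0..<m} {m..<n - l} {n - l..<n} (k - l)"
proof -
  have coloops: "card (A \<inter> {n - l..<n}) \<le> l" for A
    using card_mono[of "{n - l..<n}" "A \<inter> {n - l..<n}"] assms by simp
  have blocks: "X \<inter> ({0..<m} \<union> {m..<n - l}) \<inter> {m..<n - l} = X \<inter> {m..<n - l}"
    "X \<inter> ({0..<m} \<union> {m..<n - l}) \<inter> {0..<m} = X \<inter> {0..<m}" for X :: "nat set"
    by auto
  show ?thesis
    unfolding form_matroid_def loops_uniform_coloops_def direct_sum_def uniform_matroid_def ground_def indep_def
    using coloops by (auto simp: fun_eq_iff blocks)
qed

lemma disjoint_blocks_form: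
  assumes "l \<le> k" "m + k \<le> n"
  shows "disjoint_blocks {0..<m} {m..<n - l} {n - l..<n :: nat}"
  using assms by unfold_locales auto

lemma form_matroid_degenerate:
  assumes "l \<le> k" "m + k \<le> n" "l = k \<or> m = n - k"
  shows "form_matroid k n (l, m) = form_matroid k n (k, n - k)"
proof -
  have "form_matroid k n (l, m) = loops_uniform_coloops {0..<n - k} {} {n - k..<n} 0"
    if "l \<le> k" "m + k \<le> n" "l = k \<or> m = n - k" for l m
  proof (cases "l = k")
    case True
    have "form_matroid k n (l, m) = loops_uniform_coloops {0..<m} {m..<n - k} {n - k..<n} 0"
      using True that by (simp add: form_matroid_eq)
    also have "\<dots> = loops_uniform_coloops ({0..<m} \<union> {m..<n - k}) {} {n - k..<n} 0"
      by (rule loops_uniform_coloops_all_loops) simp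
    also have "{0..<m} \<union> {m..<n - k} = {0..<n - k}" using that by auto
    finally show ?thesis .
  next
    case False
    then have m: "m = n - k" using that by auto
    have "form_matroid k n (l, m) = loops_uniform_coloops {0..<n - k} {n - k..<n - l} {n - l..<n} (k - l)"
      using m that by (simp add: form_matroid_eq)
    also have "\<dots> = loops_uniform_coloops {0..<n - k} {} ({n - k..<n - l} \<union> {n - l..<n}) 0"
      using that by (intro loops_uniform_coloops_all_coloops) auto
    also have "{n - k..<n - l} \<union> {n - l..<n} = {n - k..<n}" using that by auto
    finally show ?thesis .
  qed
  from this[OF assms] this[of k "n - k"] assms show ?thesis by simp
qed

lemma
  assumes "l \<le> k" "m + k \<le> n"
  shows is_matroid_form_matroid: "is_matroid (form_matroid k n (l, m))"
    and card_ground_form_matroid: "card (ground (form_matroid k n (l, m))) = n"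
    and matroid_rank_form_matroid: "matroid_rank (form_matroid k n (l, m)) = k"
proof -
  interpret disjoint_blocks "{0..<m}" "{m..<n - l}" "{n - l..<n}"
    using assms by (rule disjoint_blocks_form)
  have ground: "{0..<m} \<union> {m..<n - l} \<union> {n - l..<n} = {0..<n}" using assms by auto
  show "is_matroid (form_matroid k n (l, m))"
    unfolding form_matroid_eq[OF assms] by (rule is_matroid_loops_uniform_coloops)
  show "card (ground (form_matroid k n (l, m))) = n"
    unfolding form_matroid_eq[OF assms] by (simp add: ground)
  show "matroid_rank (form_matroid k n (l, m)) = k"
    unfolding form_matroid_eq[OF assms] matroid_rank_def
    using assms by (simp add: rk_loops_uniform_coloops ground)
qed

lemma tutte_poly_form_matroid:
  assumes "l \<le> k" "m + k \<le> n"
  shows "tutte_poly (form_matroid k n (l, m)) = var_x ^ l * var_y ^ m * tutte_uniform (k - l) (n - l - m)"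
proof -
  interpret disjoint_blocks "{0..<m}" "{m..<n - l}" "{n - l..<n}"
    using assms by (rule disjoint_blocks_form)
  show ?thesis
    unfolding form_matroid_eq[OF assms] using assms
    by (subst tutte_poly_loops_uniform_coloops) simp_all
qed

definition form_reduced_params :: "nat \<Rightarrow> nat \<Rightarrow> (nat \<times> nat) set" where
  "form_reduced_params k n = insert (k, n - k) ({..<k} \<times> {..<n - k})"

lemma form_reduced_params_subset: "k \<le> n \<Longrightarrow> form_reduced_params k n \<subseteq> form_params k n"
  by (auto simp: form_reduced_params_def form_params_def)

lemma card_form_reduced_params: "card (form_reduced_params k n) = k * (n - k) + 1"
  by (simp add: form_reduced_params_def card_cartesian_product)

lemma int_lin_indep_tutte_form_matroid:
  assumes "k \<le> n"
  shows "int_lin_indep (\<lambda>p. tutte_poly (form_matroid k n p)) (form_reduced_params k n)"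
proof (rule int_lin_indep_triangular)
  let ?R = "form_reduced_params k n"
  let ?e = "\<lambda>(l, m). if l < k then (Suc l, m) else (l, m)"
  show "finite ?R" by (simp add: form_reduced_params_def)
  show "inj_on (\<lambda>(l, m). (m, l)) ?R" by (auto simp: inj_on_def)
  have tutte: "tutte_poly (form_matroid k n (l, m)) = var_x ^ l * var_y ^ m * tutte_uniform (k - l) (n - l - m)"
    if "(l, m) \<in> ?R" for l m
  proof (rule tutte_poly_form_matroid)
    show "l \<le> k" "m + k \<le> n" using that assms by (auto simp: form_reduced_params_def)
  qed
  show "coeff_xy (tutte_poly (form_matroid k n p)) (?e p) \<noteq> 0" if "p \<in> ?R" for p
  proof -
    obtain l m where p: "p = (l, m)" by fastforce
    show ?thesis
    proof (cases "l < k")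
      case True
      then have "m < n - k" using that p by (simp add: form_reduced_params_def)
      then have "coeff_xy (tutte_uniform (k - l) (n - l - m)) (1, 0) \<noteq> 0"
        using True by (subst coeff_xy_tutte_uniform_1_0) (simp_all add: binomial_eq_0_iff)
      then show ?thesis using that True by (simp add: p tutte coeff_xy_monomial_mult del: coeff_xy.simps)
    next
      case False
      then have "p = (k, n - k)" using that p by (simp add: form_reduced_params_def)
      then show ?thesis
        using that coeff_xy_monomial_mult[of k "n - k" 1 k "n - k"] by (simp add: tutte tutte_uniform_0_0)
    qed
  qed
  show "coeff_xy (tutte_poly (form_matroid k n q)) (?e p) = 0"
    if "p \<in> ?R" "q \<in> ?R" "(case p of (l, m) \<Rightarrow> (m, l)) < (case q of (l, m) \<Rightarrow> (m, l))" for p q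
  proof -
    obtain l m l' m' where pq: "p = (l, m)" "q = (l', m')" by fastforce
    have "l < k" "m < n - k" "l' \<le> k" "m' \<le> n - k" and "m < m' \<or> m = m' \<and> l < l'"
      using that by (auto simp: pq form_reduced_params_def)
    moreover have "coeff_xy (tutte_uniform (k - l') (n - l' - m')) (0, 0) = 0" if "m' < n - k"
      using that \<open>l' \<le> k\<close> by (intro coeff_xy_tutte_uniform_0_0) linarith
    ultimately show ?thesis
      using that(2) by (auto simp: pq tutte coeff_xy_monomial_mult simp del: coeff_xy.simps)
  qed
qed

lemma form_classes_eq:
  assumes "k \<le> n"
  shows "form_classes k n = (\<lambda>p. iso_class (form_matroid k n p)) ` form_reduced_params k n"
proof
  show "(\<lambda>p. iso_class (form_matroid k n p)) ` form_reduced_params k n \<subseteq> form_classes k n"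
    using form_reduced_params_subset[OF assms] by (auto simp: form_classes_def)
  show "form_classes k n \<subseteq> (\<lambda>p. iso_class (form_matroid k n p)) ` form_reduced_params k n"
  proof (clarsimp simp: form_classes_def form_params_def)
    fix l m assume lm: "l \<le> k" "m + k \<le> n"
    show "iso_class (form_matroid k n (l, m)) \<in> (\<lambda>p. iso_class (form_matroid k n p)) ` form_reduced_params k n"
    proof (cases "l < k \<and> m < n - k")
      case True
      then show ?thesis by (simp add: form_reduced_params_def)
    next
      case False
      then have "form_matroid k n (l, m) = form_matroid k n (k, n - k)"
        using lm by (intro form_matroid_degenerate) auto
      then show ?thesis by (simp add: form_reduced_params_def)
    qed
  qed
qed

lemma inj_on_iso_class_form_matroid:
  assumes "k \<le> n"
  shows "inj_on (\<lambda>p. iso_class (form_matroid k n p)) (form_reduced_params k n)"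
proof (rule inj_onI)
  let ?tutte = "\<lambda>p. tutte_poly (form_matroid k n p)"
  fix p q
  assume p: "p \<in> form_reduced_params k n" and q: "q \<in> form_reduced_params k n"
    and same_class: "iso_class (form_matroid k n p) = iso_class (form_matroid k n q)"
  obtain l m where "p = (l, m)" "l \<le> k" "m + k \<le> n"
    using p assms by (auto simp: form_reduced_params_def)
  then have "form_matroid k n p \<in> iso_class (form_matroid k n q)"
    unfolding same_class[symmetric] by (simp add: iso_class_self is_matroid_form_matroid)
  then have "?tutte p = ?tutte q" by (rule tutte_poly_iso_class)
  have "inj_on ?tutte (form_reduced_params k n)"
    using int_lin_indep_tutte_form_matroid[OF assms]
    by (intro int_lin_indep_inj_on) (simp_all add: form_reduced_params_def)
  then show "p = q" using \<open>?tutte p = ?tutte q\<close> p q by (rule inj_onD)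
qed

theorem proposition4p10:
  fixes k n :: nat
  assumes "k \<le> n"
  shows "(\<forall>p \<in> form_params k n. is_matroid (form_matroid k n p) \<and>
            card (ground (form_matroid k n p)) = n \<and>
            matroid_rank (form_matroid k n p) = k)
       \<and> card (form_classes k n) = k * (n - k) + 1
       \<and> (\<forall>rep. (\<forall>C \<in> form_classes k n. rep C \<in> C) \<longrightarrow>
              int_lin_indep (\<lambda>C. tutte_poly (rep C)) (form_classes k n))"
proof -
  let ?R = "form_reduced_params k n"
  let ?class = "\<lambda>p. iso_class (form_matroid k n p)"
  have classes: "form_classes k n = ?class ` ?R"
    using assms by (rule form_classes_eq)
  have inj: "inj_on ?class ?R"
    using assms by (rule inj_on_iso_class_form_matroid)
  have "int_lin_indep (\<lambda>C. tutte_poly (rep C)) (form_classes k n)"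
    if "\<forall>C \<in> form_classes k n. rep C \<in> C" for rep
    unfolding classes using inj int_lin_indep_tutte_form_matroid[OF assms]
  proof (rule int_lin_indep_image)
    fix p assume "p \<in> ?R"
    then have "rep (?class p) \<in> ?class p" using that classes by blast
    then show "tutte_poly (rep (?class p)) = tutte_poly (form_matroid k n p)"
      by (rule tutte_poly_iso_class)
  qed
  then show ?thesis
    using classes card_image[OF inj] card_form_reduced_params
    by (auto simp: form_params_def is_matroid_form_matroid card_ground_form_matroid
        matroid_rank_form_matroid)
qed

end
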